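(* Let $\Gamma$ be a connected $\mathbb Z$-leg-weighted graph with edge set $E$, and let $w_1,w_2\in W(\Gamma)$ be two weightings. Then $c_{w_1}\cap c_{w_2}$ is a face of $c_{w_1}$.
   Context: A graph consists of a finite set $V$ of vertices, a finite set $H$ of half-edges, a map $\mathrm{end}\colon H\to V$, an involution $i$ of $H$, a genus function $g\colon V\to\mathbb Z_{\ge0}$ and an integer twist $k$. Legs are fixed points of $i$; edges are pairs $\{h,i(h)\}$ with $h\ne i(h)$; a directed edge is a non-leg half-edge $h$, with source $\mathrm{end}(h)$ and target $\mathrm{end}(i(h))$. The valence of $v$ is the number of non-leg half-edges at $v$, and $\kappa(v)=2g(v)-2+\mathrm{val}(v)$; $g(\Gamma)$ is the first Betti number plus $\sum_v g(v)$. A cycle is a closed walk of directed edges (target of each is the source of the next) repeating no vertex or undirected edge. A weighting is a function $w\colon H\to\mathbb Z$ with $w(h)+w(i(h))=0$ whenever $h\neq i(h)$, and $\sum_{\mathrm{end}(h)=v}w(h)+k\kappa(v)=0$ for every vertex $v$. A leg-weighted graph is a graph with a function from legs to $\mathbb Z$ summing to $-k(2g(\Gamma)-2)$; $W(\Gamma)$ is the set of weightings restricting to the given leg values. For a directed edge $e$ in a cycle $\gamma$, $w_\gamma(e)$ is the value of $w$ on the half-edge of $e$ at its source (in the direction of $\gamma$). A thickness $t\in\mathbb Q_{\ge0}^E$ is compatible with $w$ if $\sum_{e\in\gamma}w_\gamma(e)t(e)=0$ for every cycle $\gamma$; $c_w\subseteq\mathbb Q_{\ge0}^E$ is the rational polyhedral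 cone of thicknesses compatible with $w$. *)

theory Defs
  imports Complex_Main
begin

record ('v, 'h) graph =
  verts :: "'v set"
  halfs :: "'h set"
  endp  :: "'h \<Rightarrow> 'v"
  invol :: "'h \<Rightarrow> 'h"
  gen   :: "'v \<Rightarrow> nat"
  twist :: int

definition is_graph :: "('v, 'h) graph \<Rightarrow> bool" where
  "is_graph G \<longleftrightarrow> finite (verts G) \<and> finite (halfs G)
     \<and> (\<forall>h\<in>halfs G. endp G h \<in> verts G)
     \<and> (\<forall>h\<in>halfs G. invol G h \<in> halfs G \<and> invol G (invol G h) = h)"

definition legs :: "('v, 'h) graph \<Rightarrow> 'h set" where
  "legs G = {h \<in> halfs G. invol G h = h}"

definition dedges :: "('v, 'h) graph \<Rightarrow> 'h set" where
  "dedges G = {h \<in> halfs G. invol G h \<noteq> h}"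

definition edge_of :: "('v, 'h) graph \<Rightarrow> 'h \<Rightarrow> 'h set" where
  "edge_of G h = {h, invol G h}"

definition edges :: "('v, 'h) graph \<Rightarrow> 'h set set" where
  "edges G = edge_of G ` dedges G"

definition src :: "('v, 'h) graph \<Rightarrow> 'h \<Rightarrow> 'v" where
  "src G h = endp G h"

definition tgt :: "('v, 'h) graph \<Rightarrow> 'h \<Rightarrow> 'v" where
  "tgt G h = endp G (invol G h)"

definition valence :: "('v, 'h) graph \<Rightarrow> 'v \<Rightarrow> nat" where
  "valence G v = card {h \<in> dedges G. endp G h = v}"

definition kappa :: "('v, 'h) graph \<Rightarrow> 'v \<Rightarrow> int" where
  "kappa G v = 2 * int (gen G v) - 2 + int (valence G v)"

definition adj :: "('v, 'h) graph \<Rightarrow> ('v \<times> 'v) set" where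
  "adj G = {(src G h, tgt G h) | h. h \<in> dedges G}"

definition connected_graph :: "('v, 'h) graph \<Rightarrow> bool" where
  "connected_graph G \<longleftrightarrow> verts G \<noteq> {} \<and>
     (\<forall>u\<in>verts G. \<forall>v\<in>verts G. (u, v) \<in> (adj G)\<^sup>*)"

definition num_components :: "('v, 'h) graph \<Rightarrow> nat" where
  "num_components G = card (verts G // ((adj G)\<^sup>* \<inter> (verts G \<times> verts G)))"

definition betti1 :: "('v, 'h) graph \<Rightarrow> int" where
  "betti1 G = int (card (edges G)) - int (card (verts G)) + int (num_components G)"

definition graph_genus :: "('v, 'h) graph \<Rightarrow> int" where
  "graph_genus G = betti1 G + (\<Sum>v\<in>verts G. int (gen G v))"

definition is_weighting :: "('v, 'h) graph \<Rightarrow> ('h \<Rightarrow> int) \<Rightarrow> bool" where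
  "is_weighting G w \<longleftrightarrow>
     (\<forall>h\<in>dedges G. w h + w (invol G h) = 0)
     \<and> (\<forall>v\<in>verts G. (\<Sum>h\<in>{h \<in> halfs G. endp G h = v}. w h) + twist G * kappa G v = 0)"

definition is_leg_weighting :: "('v, 'h) graph \<Rightarrow> ('h \<Rightarrow> int) \<Rightarrow> bool" where
  "is_leg_weighting G m \<longleftrightarrow>
     (\<Sum>h\<in>legs G. m h) = - twist G * (2 * graph_genus G - 2)"

definition weightings :: "('v, 'h) graph \<Rightarrow> ('h \<Rightarrow> int) \<Rightarrow> ('h \<Rightarrow> int) set" where
  "weightings G m = {w. is_weighting G w \<and> (\<forall>h\<in>legs G. w h = m h)}"

definition is_cycle :: "('v, 'h) graph \<Rightarrow> 'h list \<Rightarrow> bool" where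
  "is_cycle G c \<longleftrightarrow> c \<noteq> [] \<and> set c \<subseteq> dedges G
     \<and> (\<forall>j < length c. tgt G (c ! j) = src G (c ! ((j + 1) mod length c)))
     \<and> distinct (map (src G) c)
     \<and> distinct (map (edge_of G) c)"

text \<open>Thicknesses are elements of Q_{>=0}^E, represented as functions on
  undirected edges that vanish outside E.\<close>
definition thicknesses :: "('v, 'h) graph \<Rightarrow> ('h set \<Rightarrow> rat) set" where
  "thicknesses G = {t. (\<forall>e\<in>edges G. t e \<ge> 0) \<and> (\<forall>e. e \<notin> edges G \<longrightarrow> t e = 0)}"

definition compatible :: "('v, 'h) graph \<Rightarrow> ('h \<Rightarrow> int) \<Rightarrow> ('h set \<Rightarrow> rat) \<Rightarrow> bool" where
  "compatible G w t \<longleftrightarrow>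
     (\<forall>c. is_cycle G c \<longrightarrow> (\<Sum>h\<leftarrow>c. of_int (w h) * t (edge_of G h)) = 0)"

definition cone_w :: "('v, 'h) graph \<Rightarrow> ('h \<Rightarrow> int) \<Rightarrow> ('h set \<Rightarrow> rat) set" where
  "cone_w G w = {t \<in> thicknesses G. compatible G w t}"

definition convex_rat :: "('e \<Rightarrow> rat) set \<Rightarrow> bool" where
  "convex_rat S \<longleftrightarrow> (\<forall>x\<in>S. \<forall>y\<in>S. \<forall>u::rat. 0 \<le> u \<and> u \<le> 1 \<longrightarrow>
       (\<lambda>e. (1 - u) * x e + u * y e) \<in> S)"

definition open_segment_rat :: "('e \<Rightarrow> rat) \<Rightarrow> ('e \<Rightarrow> rat) \<Rightarrow> ('e \<Rightarrow> rat) set" where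
  "open_segment_rat a b =
     (if a = b then {} else {(\<lambda>e. (1 - u) * a e + u * b e) | u::rat. 0 < u \<and> u < 1})"

definition face_of_rat :: "('e \<Rightarrow> rat) set \<Rightarrow> ('e \<Rightarrow> rat) set \<Rightarrow> bool" (infixr "face'_of'_rat" 50) where
  "T face_of_rat S \<longleftrightarrow> T \<subseteq> S \<and> convex_rat T \<and>
     (\<forall>a\<in>S. \<forall>b\<in>S. \<forall>x\<in>T. x \<in> open_segment_rat a b \<longrightarrow> a \<in> T \<and> b \<in> T)"

end

theory Submission
  imports Defs
begin

text \<open>Let \<open>d = w\<^sub>1 - w\<^sub>2\<close>. Both weightings have the same vertex sums and agree on legs,
  so \<open>d\<close> is a divergence-free flow. If \<open>t\<close> is compatible with both weightings, the flow
  \<open>d t\<close> sums to zero over every cycle, hence over every closed walk, so it is the gradient of a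
  potential on the connected graph. A divergence-free flow is orthogonal to every gradient, which
  gives \<open>\<Sum> d\<^sup>2 t = 0\<close>: the thickness vanishes on every edge where the weightings differ.
  Conversely, such thicknesses are compatible with \<open>w\<^sub>2\<close> as soon as with \<open>w\<^sub>1\<close>. So
  \<open>c\<^sub>w\<^sub>1 \<inter> c\<^sub>w\<^sub>2\<close> is cut out of \<open>c\<^sub>w\<^sub>1\<close> by coordinates that are nonnegative on it,
  and is therefore a face.\<close>

inductive walk :: "('v, 'h) graph \<Rightarrow> 'v \<Rightarrow> 'h list \<Rightarrow> 'v \<Rightarrow> bool" for G where
  walk_Nil: "walk G u [] u"
| walk_Cons: "h \<in> dedges G \<Longrightarrow> src G h = u \<Longrightarrow> walk G (tgt G h) hs v \<Longrightarrow> walk G u (h # hs) v"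

inductive_simps walk_Nil_iff: "walk G u [] v"
inductive_simps walk_Cons_iff: "walk G u (h # hs) v"

lemma walk_append_iff: "walk G u (xs @ ys) v \<longleftrightarrow> (\<exists>a. walk G u xs a \<and> walk G a ys v)"
  by (induction xs arbitrary: u) (auto simp: walk_Nil_iff walk_Cons_iff)

lemma walk_snoc: "walk G u hs (src G h) \<Longrightarrow> h \<in> dedges G \<Longrightarrow> walk G u (hs @ [h]) (tgt G h)"
  by (auto simp: walk_append_iff walk_Cons_iff walk_Nil_iff)

lemma walk_set_subset: "walk G u c v \<Longrightarrow> set c \<subseteq> dedges G"
  by (induction rule: walk.induct) auto

lemma walk_nth_tgt:
  "walk G u c v \<Longrightarrow> j < length c \<Longrightarrow>
    tgt G (c ! j) = (if j + 1 < length c then src G (c ! (j + 1)) else v)"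
proof (induction arbitrary: j rule: walk.induct)
  case (walk_Cons h u hs v)
  then show ?case
    by (cases j; cases hs) (auto simp: walk_Nil_iff walk_Cons_iff)
qed simp

lemma closed_walk_nth_tgt:
  assumes "walk G u c u" "j < length c"
  shows "tgt G (c ! j) = src G (c ! ((j + 1) mod length c))"
proof (cases "j + 1 < length c")
  case False
  with assms(2) have "j + 1 = length c" by simp
  then have "(j + 1) mod length c = 0" by simp
  moreover obtain h hs where "c = h # hs" using assms(2) by (cases c) auto
  ultimately show ?thesis
    using False walk_nth_tgt[OF assms] assms(1) by (simp add: walk_Cons_iff)
qed (use walk_nth_tgt[OF assms] in simp)

lemma invol_dedge:
  assumes "is_graph G" "h \<in> dedges G"
  shows "invol G h \<in> dedges G" "invol G (invol G h) = h"
  using assms by (auto simp: is_graph_def dedges_def)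

lemma walk_rev:
  assumes "is_graph G"
  shows "walk G u c v \<Longrightarrow> walk G v (rev (map (invol G) c)) u"
proof (induction rule: walk.induct)
  case (walk_Cons h u hs v)
  then have "walk G (tgt G h) [invol G h] u"
    using invol_dedge[OF assms] by (auto simp: walk_Cons_iff walk_Nil_iff src_def tgt_def)
  with walk_Cons.IH show ?case by (auto simp: walk_append_iff)
qed (simp add: walk_Nil)

lemma connected_graph_walk:
  assumes "connected_graph G" "u \<in> verts G" "v \<in> verts G"
  obtains c where "walk G u c v"
proof -
  have "(u, v) \<in> (adj G)\<^sup>*" using assms by (auto simp: connected_graph_def)
  then have "\<exists>c. walk G u c v"
  proof (induction rule: rtrancl_induct)
    case (step y z)
    then show ?case by (auto simp: adj_def intro: walk_snoc)
  qed (auto intro: walk_Nil)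
  with that show thesis by blast
qed

lemma closed_walk_split_at_repeated_vertex:
  assumes c: "walk G u c u" and ij: "i < j" "j < length c" "src G (c ! i) = src G (c ! j)"
  obtains c1 c2 c3 a where "c = c1 @ c2 @ c3" "c2 \<noteq> []" "c3 \<noteq> []"
    "walk G a c2 a" "walk G a (c3 @ c1) a"
proof -
  define c2 where "c2 = take (j - i) (drop i c)"
  have dropi: "drop i c = c2 @ drop j c"
    unfolding c2_def using ij(1) by (metis append_take_drop_id drop_drop le_add_diff_inverse2 less_imp_le)
  have split: "c = take i c @ c2 @ drop j c"
    by (simp flip: dropi)
  obtain a b where walks: "walk G u (take i c) a" "walk G a c2 b" "walk G b (drop j c) u"
    using c split by (metis walk_append_iff)
  have "walk G a (c ! i # drop (Suc i) c) u"
    using walks(2,3) ij by (metis Cons_nth_drop_Suc dropi order.strict_trans walk_append_iff)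
  moreover have "walk G b (c ! j # drop (Suc j) c) u"
    using walks(3) ij by (simp add: Cons_nth_drop_Suc)
  ultimately have "a = b" using ij(3) by (simp add: walk_Cons_iff)
  moreover have "c2 \<noteq> []" "drop j c \<noteq> []" using ij by (auto simp: c2_def)
  ultimately show thesis
    using that[OF split] walks by (auto simp: walk_append_iff)
qed

lemma closed_walk_distinct_vertices:
  assumes G: "is_graph G" and c: "walk G u c u" "c \<noteq> []" and dsrc: "distinct (map (src G) c)"
  shows "is_cycle G c \<or> (\<exists>h. c = [h, invol G h])"
proof (cases "distinct (map (edge_of G) c)")
  case True
  then show ?thesis
    using c dsrc walk_set_subset[OF c(1)] closed_walk_nth_tgt[OF c(1)] by (auto simp: is_cycle_def)
next
  case False
  let ?n = "length c"
  have src_inj: "a = b" if "a < ?n" "b < ?n" "src G (c ! a) = src G (c ! b)" for a b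
    using that nth_eq_iff_index_eq[OF dsrc] by simp
  obtain i j where ij: "i < j" "j < ?n" "edge_of G (c ! i) = edge_of G (c ! j)"
    using False unfolding distinct_conv_nth by (metis length_map linorder_neq_iff nth_map)
  have "c ! j \<noteq> c ! i" using src_inj[of i j] ij by auto
  with ij(3) have cj: "c ! j = invol G (c ! i)" by (auto simp: edge_of_def)
  have ci: "c ! i \<in> dedges G" using walk_set_subset[OF c(1)] ij by auto
  have "src G (c ! j) = src G (c ! ((i + 1) mod ?n))"
    using closed_walk_nth_tgt[OF c(1), of i] ij cj by (simp add: src_def tgt_def)
  then have j: "j = i + 1" using src_inj[of j "(i + 1) mod ?n"] ij by simp
  have "src G (c ! i) = src G (c ! ((j + 1) mod ?n))"
    using closed_walk_nth_tgt[OF c(1), of j] ij cj invol_dedge[OF G ci] by (simp add: src_def tgt_def)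
  moreover have "(j + 1) mod ?n < ?n" using c(2) by simp
  ultimately have i: "i = (i + 2) mod ?n" using src_inj[of i "(j + 1) mod ?n"] ij j by simp
  have "?n = i + 2"
  proof (rule ccontr)
    assume "?n \<noteq> i + 2"
    with ij j have "i + 2 < ?n" by simp
    with i show False by simp
  qed
  with i have "i = 0" "?n = 2" by simp_all
  then have "c = [c ! i, c ! j]" using j by (cases c) (auto simp: length_Suc_conv)
  then show ?thesis using cj by metis
qed

lemma closed_walk_sum_eq_0:
  fixes f :: "'h \<Rightarrow> 'a::ab_group_add"
  assumes G: "is_graph G"
    and anti: "\<And>h. h \<in> dedges G \<Longrightarrow> f (invol G h) = - f h"
    and cycles: "\<And>c. is_cycle G c \<Longrightarrow> sum_list (map f c) = 0"
  shows "walk G u c u \<Longrightarrow> sum_list (map f c) = 0"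
proof (induction "length c" arbitrary: c u rule: less_induct)
  case less
  show ?case
  proof (cases "distinct (map (src G) c)")
    case False
    then obtain i j where "i < j" "j < length c" "src G (c ! i) = src G (c ! j)"
      unfolding distinct_conv_nth by (metis length_map linorder_neq_iff nth_map)
    then obtain c1 c2 c3 a where "c = c1 @ c2 @ c3" "c2 \<noteq> []" "c3 \<noteq> []"
        "walk G a c2 a" "walk G a (c3 @ c1) a"
      using closed_walk_split_at_repeated_vertex less.prems by metis
    then show ?thesis using less.hyps[of c2 a] less.hyps[of "c3 @ c1" a] by (auto simp: add.commute)
  next
    case True
    then consider "c = []" | "is_cycle G c" | h where "c = [h, invol G h]"
      using closed_walk_distinct_vertices[OF G less.prems] by blast
    then show ?thesis
      using walk_set_subset[OF less.prems] by cases (auto simp: cycles anti)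
  qed
qed

lemma sum_list_rev_invol:
  fixes f :: "'h \<Rightarrow> 'a::ab_group_add"
  assumes "\<And>h. h \<in> dedges G \<Longrightarrow> f (invol G h) = - f h"
  shows "set c \<subseteq> dedges G \<Longrightarrow> sum_list (map f (rev (map (invol G) c))) = - sum_list (map f c)"
  by (induction c) (auto simp: assms)

lemma walk_sum_path_independent:
  fixes f :: "'h \<Rightarrow> 'a::ab_group_add"
  assumes G: "is_graph G"
    and anti: "\<And>h. h \<in> dedges G \<Longrightarrow> f (invol G h) = - f h"
    and cycles: "\<And>c. is_cycle G c \<Longrightarrow> sum_list (map f c) = 0"
    and walks: "walk G u c1 v" "walk G u c2 v"
  shows "sum_list (map f c1) = sum_list (map f c2)"
proof -
  have "walk G u (c1 @ rev (map (invol G) c2)) u"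
    using walks walk_rev[OF G walks(2)] by (auto simp: walk_append_iff)
  then have "sum_list (map f (c1 @ rev (map (invol G) c2))) = 0"
    using closed_walk_sum_eq_0[OF G anti cycles] by blast
  then show ?thesis
    using sum_list_rev_invol[of G f, OF anti walk_set_subset[OF walks(2)]] by simp
qed

lemma src_in_verts: "is_graph G \<Longrightarrow> h \<in> dedges G \<Longrightarrow> src G h \<in> verts G"
  by (auto simp: is_graph_def dedges_def src_def)

lemma cycle_sums_zero_imp_potential:
  fixes f :: "'h \<Rightarrow> 'a::ab_group_add"
  assumes G: "is_graph G" and conn: "connected_graph G"
    and anti: "\<And>h. h \<in> dedges G \<Longrightarrow> f (invol G h) = - f h"
    and cycles: "\<And>c. is_cycle G c \<Longrightarrow> sum_list (map f c) = 0"
  obtains \<phi> where "\<And>h. h \<in> dedges G \<Longrightarrow> f h = \<phi> (tgt G h) - \<phi> (src G h)"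
proof -
  obtain r where r: "r \<in> verts G" using conn by (auto simp: connected_graph_def)
  define \<phi> where "\<phi> v = sum_list (map f (SOME c. walk G r c v))" for v
  have \<phi>: "\<phi> v = sum_list (map f c)" if "walk G r c v" for v c
    unfolding \<phi>_def using that
    by (metis (mono_tags, lifting) G anti cycles someI walk_sum_path_independent)
  have "f h = \<phi> (tgt G h) - \<phi> (src G h)" if h: "h \<in> dedges G" for h
  proof -
    obtain c where c: "walk G r c (src G h)"
      using connected_graph_walk[OF conn r src_in_verts[OF G h]] .
    have "\<phi> (tgt G h) = sum_list (map f c) + f h"
      using \<phi>[OF walk_snoc[OF c h]] by simp
    with \<phi>[OF c] show ?thesis by simp
  qed
  then show thesis by (rule that)
qed

lemma divergence_free_sum_gradient_eq_0:
  fixes d \<phi> :: "_ \<Rightarrow> 'a::comm_ring"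
  assumes G: "is_graph G"
    and anti: "\<And>h. h \<in> dedges G \<Longrightarrow> d (invol G h) = - d h"
    and legs: "\<And>h. h \<in> legs G \<Longrightarrow> d h = 0"
    and div: "\<And>v. v \<in> verts G \<Longrightarrow> (\<Sum>h\<in>{h \<in> halfs G. endp G h = v}. d h) = 0"
  shows "(\<Sum>h\<in>dedges G. d h * (\<phi> (tgt G h) - \<phi> (src G h))) = 0"
proof -
  have fin: "finite (halfs G)" and sub: "dedges G \<subseteq> halfs G"
    using G by (auto simp: is_graph_def dedges_def)
  have "bij_betw (invol G) (dedges G) (dedges G)"
    by (rule bij_betw_byWitness[where f' = "invol G"]) (auto simp: invol_dedge[OF G])
  then have "(\<Sum>h\<in>dedges G. d h * \<phi> (tgt G h)) = (\<Sum>h\<in>dedges G. d (invol G h) * \<phi> (tgt G (invol G h)))"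
    by (rule sum.reindex_bij_betw[symmetric])
  also have "\<dots> = - (\<Sum>h\<in>dedges G. d h * \<phi> (src G h))"
    by (simp add: sum_negf[symmetric] anti invol_dedge[OF G] tgt_def src_def)
  finally have tgt_sum: "(\<Sum>h\<in>dedges G. d h * \<phi> (tgt G h)) = - (\<Sum>h\<in>dedges G. d h * \<phi> (src G h))" .
  have "(\<Sum>h\<in>dedges G. d h * \<phi> (src G h)) = (\<Sum>h\<in>halfs G. d h * \<phi> (endp G h))"
    unfolding src_def by (rule sum.mono_neutral_left[OF fin sub]) (auto simp: dedges_def legs_def legs)
  also have "\<dots> = (\<Sum>v\<in>verts G. \<Sum>h\<in>{h \<in> halfs G. endp G h = v}. d h * \<phi> (endp G h))"
    using G by (intro sum.group[symmetric]) (auto simp: is_graph_def)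
  also have "\<dots> = (\<Sum>v\<in>verts G. (\<Sum>h\<in>{h \<in> halfs G. endp G h = v}. d h) * \<phi> v)"
    by (auto simp: sum_distrib_right intro!: sum.cong)
  also have "\<dots> = 0" by (simp add: div)
  finally have src_sum: "(\<Sum>h\<in>dedges G. d h * \<phi> (src G h)) = 0" .
  show ?thesis
    using tgt_sum src_sum by (simp add: right_diff_distrib sum_subtractf)
qed

lemma edge_of_invol:
  assumes "is_graph G" "h \<in> dedges G"
  shows "edge_of G (invol G h) = edge_of G h"
  using invol_dedge[OF assms] by (auto simp: edge_of_def)

lemma is_weighting_invol:
  "is_weighting G w \<Longrightarrow> h \<in> dedges G \<Longrightarrow> w (invol G h) = - w h"
  by (simp add: is_weighting_def eq_neg_iff_add_eq_0 add.commute)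

lemma thickness_vanishes_where_weightings_differ:
  fixes G :: "('v, 'h) graph" and w1 w2 :: "'h \<Rightarrow> int"
  assumes G: "is_graph G" and conn: "connected_graph G"
    and w: "is_weighting G w1" "is_weighting G w2" and legs: "\<forall>h\<in>legs G. w1 h = w2 h"
    and t: "t \<in> thicknesses G" "compatible G w1 t" "compatible G w2 t"
    and h: "h \<in> dedges G" "w1 h \<noteq> w2 h"
  shows "t (edge_of G h) = 0"
proof -
  define d :: "'h \<Rightarrow> rat" where "d h = of_int (w1 h - w2 h)" for h
  define f where "f = (\<lambda>h. d h * t (edge_of G h))"
  have d_anti: "d (invol G h) = - d h" if "h \<in> dedges G" for h
    using w that by (simp add: is_weighting_invol d_def)
  have f_anti: "f (invol G h) = - f h" if "h \<in> dedges G" for h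
    using that by (simp add: f_def d_anti edge_of_invol[OF G])
  have f_cycles: "sum_list (map f c) = 0" if "is_cycle G c" for c
    using t(2,3) that by (simp add: compatible_def f_def d_def left_diff_distrib sum_list_subtractf)
  obtain \<phi> where \<phi>: "\<And>h. h \<in> dedges G \<Longrightarrow> f h = \<phi> (tgt G h) - \<phi> (src G h)"
    using cycle_sums_zero_imp_potential[where f = f, OF G conn f_anti f_cycles] by blast
  have d_legs: "d h = 0" if "h \<in> legs G" for h
    using legs that by (simp add: d_def)
  have d_div: "(\<Sum>h\<in>{h \<in> halfs G. endp G h = v}. d h) = 0" if "v \<in> verts G" for v
  proof -
    have "(\<Sum>h\<in>{h \<in> halfs G. endp G h = v}. w1 h) = (\<Sum>h\<in>{h \<in> halfs G. endp G h = v}. w2 h)"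
      using w that unfolding is_weighting_def by (metis add_right_cancel)
    then show ?thesis by (simp add: d_def sum_subtractf flip: of_int_sum)
  qed
  have "(\<Sum>h\<in>dedges G. d h * (\<phi> (tgt G h) - \<phi> (src G h))) = 0"
    by (rule divergence_free_sum_gradient_eq_0[where d = d, OF G d_anti d_legs d_div])
  then have "(\<Sum>h\<in>dedges G. (d h)\<^sup>2 * t (edge_of G h)) = 0"
    by (simp add: \<phi>[symmetric] f_def power2_eq_square mult.assoc cong: sum.cong)
  moreover have "finite (dedges G)"
    using G by (auto simp: is_graph_def dedges_def)
  moreover have "t (edge_of G h) \<ge> 0" if "h \<in> dedges G" for h
    using t(1) that by (auto simp: thicknesses_def edges_def)
  ultimately have "(d h)\<^sup>2 * t (edge_of G h) = 0"
    using h(1) by (simp add: sum_nonneg_eq_0_iff)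
  moreover have "d h \<noteq> 0" using h(2) by (simp add: d_def)
  ultimately show ?thesis by simp
qed

lemma convex_rat_cone_w: "convex_rat (cone_w G w)"
  unfolding convex_rat_def
proof (intro ballI allI impI)
  fix x y and u :: rat
  assume x: "x \<in> cone_w G w" and y: "y \<in> cone_w G w" and u: "0 \<le> u \<and> u \<le> 1"
  have sum_comb: "(\<Sum>h\<leftarrow>c. of_int (w h) * ((1 - u) * x (edge_of G h) + u * y (edge_of G h)))
      = (1 - u) * (\<Sum>h\<leftarrow>c. of_int (w h) * x (edge_of G h)) + u * (\<Sum>h\<leftarrow>c. of_int (w h) * y (edge_of G h))"
    for c by (induction c) (simp_all add: algebra_simps)
  from x y u show "(\<lambda>e. (1 - u) * x e + u * y e) \<in> cone_w G w"
    by (auto simp: cone_w_def thicknesses_def compatible_def sum_comb)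
qed

lemma zero_set_face_of_rat:
  assumes "convex_rat S" and nonneg: "\<And>t e. t \<in> S \<Longrightarrow> e \<in> K \<Longrightarrow> 0 \<le> t e"
  shows "{t \<in> S. \<forall>e\<in>K. t e = 0} face_of_rat S"
  unfolding face_of_rat_def
proof (intro conjI ballI impI)
  show "convex_rat {t \<in> S. \<forall>e\<in>K. t e = 0}"
    using assms(1) by (auto simp: convex_rat_def)
next
  fix a b x
  assume a: "a \<in> S" and b: "b \<in> S" and x: "x \<in> {t \<in> S. \<forall>e\<in>K. t e = 0}"
    and "x \<in> open_segment_rat a b"
  then obtain u :: rat where u: "0 < u" "u < 1" and xu: "x = (\<lambda>e. (1 - u) * a e + u * b e)"
    by (auto simp: open_segment_rat_def split: if_splits)
  have "a e = 0 \<and> b e = 0" if e: "e \<in> K" for e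
  proof -
    have "(1 - u) * a e + u * b e = 0" using x e xu by auto
    moreover have "0 \<le> (1 - u) * a e" "0 \<le> u * b e" using nonneg[OF a e] nonneg[OF b e] u by simp_all
    ultimately show ?thesis using u by (simp add: add_nonneg_eq_0_iff)
  qed
  with a b show "a \<in> {t \<in> S. \<forall>e\<in>K. t e = 0}" "b \<in> {t \<in> S. \<forall>e\<in>K. t e = 0}" by blast+
qed auto

lemma cone_w_Int_eq_zero_set:
  fixes G :: "('v, 'h) graph" and w1 w2 :: "'h \<Rightarrow> int"
  assumes G: "is_graph G" and conn: "connected_graph G"
    and w: "is_weighting G w1" "is_weighting G w2" and legs: "\<forall>h\<in>legs G. w1 h = w2 h"
  shows "cone_w G w1 \<inter> cone_w G w2
    = {t \<in> cone_w G w1. \<forall>e \<in> edge_of G ` {h \<in> dedges G. w1 h \<noteq> w2 h}. t e = 0}"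
    (is "_ = ?Z")
proof
  show "cone_w G w1 \<inter> cone_w G w2 \<subseteq> ?Z"
    using thickness_vanishes_where_weightings_differ[OF G conn w legs] by (auto simp: cone_w_def)
next
  have "compatible G w2 t" if t: "t \<in> ?Z" for t
  proof -
    have "of_int (w2 h) * t (edge_of G h) = of_int (w1 h) * t (edge_of G h)" if "h \<in> dedges G" for h
      using t that by (cases "w1 h = w2 h") auto
    then have "(\<Sum>h\<leftarrow>c. of_int (w2 h) * t (edge_of G h)) = (\<Sum>h\<leftarrow>c. of_int (w1 h) * t (edge_of G h))"
      if "is_cycle G c" for c
      using that by (intro arg_cong[where f = sum_list] map_cong) (auto simp: is_cycle_def)
    with t show ?thesis by (simp add: cone_w_def compatible_def)
  qed
  then show "?Z \<subseteq> cone_w G w1 \<inter> cone_w G w2"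
    by (auto simp: cone_w_def)
qed

theorem lemma3p6:
  fixes G :: "('v, 'h) graph" and m :: "'h \<Rightarrow> int" and w1 w2 :: "'h \<Rightarrow> int"
  assumes "is_graph G"
    and "connected_graph G"
    and "is_leg_weighting G m"
    and "w1 \<in> weightings G m"
    and "w2 \<in> weightings G m"
  shows "(cone_w G w1 \<inter> cone_w G w2) face_of_rat (cone_w G w1)"
proof -
  have w: "is_weighting G w1" "is_weighting G w2" and legs: "\<forall>h\<in>legs G. w1 h = w2 h"
    using assms(4,5) by (auto simp: weightings_def)
  have "0 \<le> t e" if "t \<in> cone_w G w1" "e \<in> edge_of G ` dedges G" for t e
    using that by (auto simp: cone_w_def thicknesses_def edges_def)
  then show ?thesis
    unfolding cone_w_Int_eq_zero_set[OF assms(1,2) w legs]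
    by (intro zero_set_face_of_rat convex_rat_cone_w) auto
qed

end
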